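(* Suppose $\hat{\mathcal W}\subseteq\mathcal W$, $\ell:\mathcal Z\times\mathcal W\to[0,1]$, and $\ell$ is $\mathfrak L$-Lipschitz with respect to $\rho:\mathcal W\times\hat{\mathcal W}\to\mathbb R^+$, i.e. $|\ell(z,w)-\ell(z,\hat w)|\le\mathfrak L\rho(w,\hat w)$ for all $z\in\mathcal Z$, $w\in\mathcal W$, $\hat w\in\hat{\mathcal W}$. Let the optimization algorithm induce the conditional distribution $\pi_S:=P_{W^{\mathsf T}|S}$ of the trajectory. Then for any $\epsilon\in\mathbb R$ and $\delta\in(0,1)$, with probability at least $1-\delta$ over $S\sim P_S$, $$\mathbb E_{W^{\mathsf T}\sim\pi_S}\big[\mathrm{gen}(S,W^{\mathsf T})\big]\le\sqrt{\frac{\mathfrak{RD}(S,\epsilon;\pi_S)+\log(\sqrt{2n}\,M/\delta)}{2n-1}+4\mathfrak L\epsilon},$$ where $M:=\exp\Big(\sup_{\nu_S\in\mathcal G^\delta_S}\mathbb E_{W^{\mathsf T}\sim\pi_S}\Big[\log\frac{d\pi_S}{d[\pi_S\nu_S]_{W^{\mathsf T}}}(W^{\mathsf T})\Big]\Big)$ and $[\pi_S\nu_S]_{W^{\mathsf T}}$ is the marginal distribution of $W^{\mathsf T}$ under $S\sim\nu_S$, $W^{\mathsf T}|S\sim\pi_S$.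
   Context: Setup: $\mathcal Z$ data space, $\mathcal W$ hypothesis space, unknown $\mu$, $S=(Z_1,\dots,Z_n)\sim P_S=\mu^{\otimes n}$ in $\mathcal S=\mathcal Z^n$. $\mathcal L(w)=\mathbb E_{Z\sim\mu}\ell(Z,w)$, $\hat{\mathcal L}(s,w)=\frac1n\sum_i\ell(z_i,w)$, $\mathrm{gen}(s,w)=\mathcal L(w)-\hat{\mathcal L}(s,w)$. Natural logs; $D_{KL}$ Kullback–Leibler divergence; $I$ mutual information; $\mathcal G^\delta_S=\{\nu_S: D_{KL}(\nu_S\|P_S)\le\log(1/\delta)\}$. Trajectory $W^{\mathsf T}=(W^t)_{t\in\mathsf T}$, $\mathsf T=[t_1:t_2]\subseteq\mathbb N$, $\Delta t:=t_2-t_1$, $\mathrm{gen}(s,w^{\mathsf T}):=\frac1{\Delta t}\sum_{t\in\mathsf T}\mathrm{gen}(s,w^t)$, and $\rho(w^{\mathsf T},\hat w^{\mathsf T}):=\frac1{\Delta t}\sum_{t\in\mathsf T}\rho(w^t,\hat w^t)$. For a dataset $s$ and conditional $P_{W^{\mathsf T}|s}$, $$\mathfrak{RD}(s,\epsilon;P_{W^{\mathsf T}|s}):=\inf_{P_{\hat W^{\mathsf T}|W^{\mathsf T},s}} I(W^{\mathsf T};\hat W^{\mathsf T})\ \text{ s.t. }\ \mathbb E[\rho(W^{\mathsf T},\hat W^{\mathsf T})]\le\epsilon,$$ with mutual information and expectation under $P_{W^{\mathsf T}|s}P_{\hat W^{\mathsf T}|W^{\mathsf T},s}$. *)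

theory Defs
  imports "HOL-Probability.Probability"
begin

definition KLe :: "'a measure \<Rightarrow> 'a measure \<Rightarrow> ereal" where
  "KLe P Q =
    (if sets P = sets Q \<and> absolutely_continuous Q P
        \<and> integrable P (\<lambda>x. ln (enn2real (RN_deriv Q P x)))
     then ereal (\<integral>x. ln (enn2real (RN_deriv Q P x)) \<partial>P) else \<infinity>)"

definition MI :: "'a measure \<Rightarrow> 'b measure \<Rightarrow> ('a \<times> 'b) measure \<Rightarrow> ereal" where
  "MI A B J = KLe J (distr J A fst \<Otimes>\<^sub>M distr J B snd)"

text \<open>Index set T = [t1:t2], taken as {t1..<t2} so that it has \<Delta>t = t2 - t1 elements.\<close>
definition Tset :: "nat \<Rightarrow> nat \<Rightarrow> nat set" where
  "Tset t1 t2 = {t1..<t2}"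

definition traj_space :: "nat \<Rightarrow> nat \<Rightarrow> 'w measure \<Rightarrow> (nat \<Rightarrow> 'w) measure" where
  "traj_space t1 t2 W = PiM (Tset t1 t2) (\<lambda>_. W)"

definition pop_loss :: "'z measure \<Rightarrow> ('z \<Rightarrow> 'w \<Rightarrow> real) \<Rightarrow> 'w \<Rightarrow> real" where
  "pop_loss \<mu> l w = (\<integral>z. l z w \<partial>\<mu>)"

definition emp_loss :: "nat \<Rightarrow> ('z \<Rightarrow> 'w \<Rightarrow> real) \<Rightarrow> (nat \<Rightarrow> 'z) \<Rightarrow> 'w \<Rightarrow> real" where
  "emp_loss n l s w = (\<Sum>i<n. l (s i) w) / real n"

definition gen :: "'z measure \<Rightarrow> nat \<Rightarrow> ('z \<Rightarrow> 'w \<Rightarrow> real) \<Rightarrow> (nat \<Rightarrow> 'z) \<Rightarrow> 'w \<Rightarrow> real" where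
  "gen \<mu> n l s w = pop_loss \<mu> l w - emp_loss n l s w"

definition gen_traj :: "'z measure \<Rightarrow> nat \<Rightarrow> ('z \<Rightarrow> 'w \<Rightarrow> real) \<Rightarrow> nat \<Rightarrow> nat
    \<Rightarrow> (nat \<Rightarrow> 'z) \<Rightarrow> (nat \<Rightarrow> 'w) \<Rightarrow> real" where
  "gen_traj \<mu> n l t1 t2 s wT = (\<Sum>t\<in>Tset t1 t2. gen \<mu> n l s (wT t)) / real (t2 - t1)"

definition rho_traj :: "('w \<Rightarrow> 'w \<Rightarrow> real) \<Rightarrow> nat \<Rightarrow> nat \<Rightarrow> (nat \<Rightarrow> 'w) \<Rightarrow> (nat \<Rightarrow> 'w) \<Rightarrow> real" where
  "rho_traj \<rho> t1 t2 wT whT = (\<Sum>t\<in>Tset t1 t2. \<rho> (wT t) (whT t)) / real (t2 - t1)"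

text \<open>Joint law of (W^T, What^T) from P_{W^T|s} = P and a reconstruction kernel K.\<close>
definition joint :: "'a measure \<Rightarrow> 'b measure \<Rightarrow> 'a measure \<Rightarrow> ('a \<Rightarrow> 'b measure) \<Rightarrow> ('a \<times> 'b) measure" where
  "joint A B P K = P \<bind> (\<lambda>w. K w \<bind> (\<lambda>wh. return (A \<Otimes>\<^sub>M B) (w, wh)))"

definition RD :: "'w measure \<Rightarrow> 'w set \<Rightarrow> ('w \<Rightarrow> 'w \<Rightarrow> real) \<Rightarrow> nat \<Rightarrow> nat \<Rightarrow> real
    \<Rightarrow> (nat \<Rightarrow> 'w) measure \<Rightarrow> ereal" where
  "RD W What \<rho> t1 t2 \<epsilon> P =
    (let A = traj_space t1 t2 W; B = traj_space t1 t2 (restrict_space W What) in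
     INF K \<in> {K. K \<in> measurable A (prob_algebra B)
                \<and> enn2ereal (\<integral>\<^sup>+ x. ennreal (rho_traj \<rho> t1 t2 (fst x) (snd x)) \<partial>(joint A B P K))
                    \<le> ereal \<epsilon>}.
       MI A B (joint A B P K))"

definition logM :: "'s measure \<Rightarrow> ('s \<Rightarrow> 't measure) \<Rightarrow> real \<Rightarrow> 's \<Rightarrow> ereal" where
  "logM PS \<pi> \<delta> s =
    (SUP \<nu> \<in> {\<nu> \<in> space (prob_algebra PS). KLe \<nu> PS \<le> ereal (ln (1 / \<delta>))}.
       KLe (\<pi> s) (\<nu> \<bind> \<pi>))"

end

theory Submission
  imports Defs
begin

text \<open>
  A PAC-Bayes argument with the data-independent prior P_S \<bind> \<pi>, the trajectory marginal of
  \<nu>_S = P_S. For a fixed trajectory, gen(S, w^T) is the mean of n i.i.d. centred [0,1]-valued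
  variables, hence sub-Gaussian with variance proxy 1/(8n) by Hoeffding's lemma; writing
  exp((2n-1) x^2) as a Gaussian mixture of exponentials exp(a x) turns this into
  E_S exp((2n-1) gen^2) \<le> sqrt(2n). By Fubini and Markov, outside a set of probability \<delta> the
  prior expectation of exp((2n-1) gen^2) is at most sqrt(2n)/\<delta>, and the Donsker-Varadhan change
  of measure from the prior to \<pi>_S bounds (2n-1) E_{\<pi>_S} gen^2 by
  D(\<pi>_S || P_S \<bind> \<pi>) + ln(sqrt(2n)/\<delta>). As P_S itself belongs to G^\<delta>_S, the divergence is at most
  log M, and Jensen's inequality concludes. The rate-distortion term and 4 L \<epsilon> enter only as
  nonnegative slack (RD \<ge> 0, and \<epsilon> \<ge> 0 whenever RD is finite).
\<close>

lemma nn_integral_div_RN_deriv_le: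
  assumes P: "sigma_finite_measure P" and ac: "absolutely_continuous P Q"
    and sets: "sets Q = sets P"
    and h[measurable]: "h \<in> borel_measurable P" and h_nonneg: "\<And>x. 0 \<le> h x"
  shows "(\<integral>\<^sup>+x. ennreal (h x / enn2real (RN_deriv P Q x)) \<partial>Q) \<le> (\<integral>\<^sup>+x. ennreal (h x) \<partial>P)"
proof -
  interpret P: sigma_finite_measure P by fact
  have "(\<integral>\<^sup>+x. ennreal (h x / enn2real (RN_deriv P Q x)) \<partial>Q)
      = (\<integral>\<^sup>+x. RN_deriv P Q x * ennreal (h x / enn2real (RN_deriv P Q x)) \<partial>P)"
    by (rule P.RN_deriv_nn_integral[OF ac sets]) simp
  also have "\<dots> \<le> (\<integral>\<^sup>+x. ennreal (h x) \<partial>P)"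
  proof (rule nn_integral_mono)
    fix x
    show "RN_deriv P Q x * ennreal (h x / enn2real (RN_deriv P Q x)) \<le> ennreal (h x)"
      using h_nonneg[of x]
      by (cases "RN_deriv P Q x") (auto simp: ennreal_mult'' [symmetric] ennreal_leI)
  qed
  finally show ?thesis .
qed

lemma (in prob_space) integral_exp_pos:
  fixes f :: "'a \<Rightarrow> real"
  assumes [measurable]: "f \<in> borel_measurable M" and f_bounded: "\<And>x. x \<in> space M \<Longrightarrow> \<bar>f x\<bar> \<le> B"
  shows "integrable M (\<lambda>x. exp (f x))" and "0 < (\<integral>x. exp (f x) \<partial>M)"
proof -
  show int: "integrable M (\<lambda>x. exp (f x))"
    by (rule integrable_const_bound[where B="exp B"]) (use f_bounded in \<open>auto simp: abs_le_iff\<close>)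
  have "(\<integral>x. exp (- B) \<partial>M) \<le> (\<integral>x. exp (f x) \<partial>M)"
    by (rule integral_mono) (use int f_bounded in \<open>force simp: abs_le_iff\<close>)+
  then have "exp (- B) \<le> (\<integral>x. exp (f x) \<partial>M)" by (simp add: prob_space)
  then show "0 < (\<integral>x. exp (f x) \<partial>M)" by (meson exp_gt_zero less_le_trans)
qed

lemma (in prob_space) exp_integral_le_integral_exp:
  fixes g :: "'a \<Rightarrow> real"
  assumes "integrable M g" and "integrable M (\<lambda>x. exp (g x))"
  shows "exp (\<integral>x. g x \<partial>M) \<le> (\<integral>x. exp (g x) \<partial>M)"
  using jensens_inequality[where X=g and q=exp and I=UNIV] assms exp_convex by auto

lemma integral_le_KLe_plus_ln_integral_exp:
  fixes Q P :: "'a measure" and f :: "'a \<Rightarrow> real"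
  assumes Q: "prob_space Q" and P: "prob_space P"
    and f[measurable]: "f \<in> borel_measurable P" and f_bounded: "\<And>x. x \<in> space P \<Longrightarrow> \<bar>f x\<bar> \<le> B"
  shows "ereal (\<integral>x. f x \<partial>Q) \<le> KLe Q P + ereal (ln (\<integral>x. exp (f x) \<partial>P))"
proof (cases "sets Q = sets P \<and> absolutely_continuous P Q
    \<and> integrable Q (\<lambda>x. ln (enn2real (RN_deriv P Q x)))")
  case False
  then have "KLe Q P = \<infinity>" unfolding KLe_def by argo
  then show ?thesis by simp
next
  case True
  then have sets: "sets Q = sets P" and ac: "absolutely_continuous P Q"
    and int_ln_RN: "integrable Q (\<lambda>x. ln (enn2real (RN_deriv P Q x)))" by auto
  interpret P: prob_space P by fact
  interpret Q: prob_space Q by fact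
  define q where "q x = enn2real (RN_deriv P Q x)" for x
  define C where "C = (\<integral>x. exp (f x) \<partial>P)"
  have fQ[measurable]: "f \<in> borel_measurable Q" using f by (simp add: measurable_cong_sets[OF sets])
  have qQ[measurable]: "q \<in> borel_measurable Q"
    unfolding measurable_cong_sets[OF sets refl] q_def by simp
  have q_nonneg: "0 \<le> q x" for x by (simp add: q_def)
  have int_ln_q: "integrable Q (\<lambda>x. ln (q x))" using int_ln_RN by (simp add: q_def)
  obtain D where D: "AE x in P. RN_deriv P Q x = ennreal (D x)" "AE x in Q. 0 < D x" "\<And>x. 0 \<le> D x"
    using P.real_RN_deriv[OF Q.finite_measure_axioms ac sets] by blast
  have q_pos: "AE x in Q. 0 < q x"
    using absolutely_continuous_AE[OF sets ac D(1)] D(2) by eventually_elim (auto simp: q_def D(3))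
  have "(\<integral>\<^sup>+x. ennreal (exp (f x) / q x) \<partial>Q) \<le> ennreal C"
    using nn_integral_div_RN_deriv_le[OF P.sigma_finite_measure_axioms ac sets, of "\<lambda>x. exp (f x)"]
      nn_integral_eq_integral[OF P.integral_exp_pos(1)[OF f f_bounded]]
    by (simp add: q_def C_def)
  then have int_ratio: "integrable Q (\<lambda>x. exp (f x) / q x)"
    and ratio_le: "(\<integral>x. exp (f x) / q x \<partial>Q) \<le> C"
    using P.integral_exp_pos(2)[OF f f_bounded] q_nonneg
    by (auto intro!: integrableI_nonneg simp: le_less_trans integral_eq_nn_integral enn2real_leI C_def)
  have int_f: "integrable Q f"
    by (rule Q.integrable_const_bound[where B=B])
      (use f_bounded sets_eq_imp_space_eq[OF sets] in auto)
  \<comment> \<open>Jensen for exp applied to f - ln q, whose exponential is the ratio bounded above.\<close>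
  have exp_log_ratio: "AE x in Q. exp (f x - ln (q x)) = exp (f x) / q x"
    using q_pos by eventually_elim (simp add: exp_diff)
  have "exp (\<integral>x. f x - ln (q x) \<partial>Q) \<le> (\<integral>x. exp (f x - ln (q x)) \<partial>Q)"
    using int_f int_ln_q integrable_cong_AE[OF _ _ exp_log_ratio] int_ratio
    by (intro Q.exp_integral_le_integral_exp) auto
  also have "\<dots> \<le> C"
    using integral_cong_AE[OF _ _ exp_log_ratio] ratio_le by simp
  finally have "(\<integral>x. f x - ln (q x) \<partial>Q) \<le> ln C"
    by (subst ln_ge_iff) (auto intro: less_le_trans[OF exp_gt_zero])
  then show ?thesis using True int_f int_ln_q by (simp add: KLe_def q_def C_def)
qed

lemma nn_integral_std_normal_exp_linear:
  "(\<integral>\<^sup>+g. ennreal (std_normal_density g * exp (a * g)) \<partial>lborel) = ennreal (exp (a\<^sup>2 / 2))"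
proof -
  have "std_normal_density g * exp (a * g) = exp (a\<^sup>2 / 2) * normal_density a 1 g" for g
    by (simp add: normal_density_def mult_exp_exp power2_eq_square field_simps)
  then have "(\<integral>\<^sup>+g. ennreal (std_normal_density g * exp (a * g)) \<partial>lborel)
      = ennreal (exp (a\<^sup>2 / 2)) * (\<integral>\<^sup>+g. ennreal (normal_density a 1 g) \<partial>lborel)"
    by (simp add: ennreal_mult nn_integral_cmult)
  also have "(\<integral>\<^sup>+g. ennreal (normal_density a 1 g) \<partial>lborel) = 1"
    by (subst nn_integral_eq_integral) auto
  finally show ?thesis by simp
qed

lemma nn_integral_std_normal_exp_quadratic:
  assumes c: "c < 1/2"
  shows "(\<integral>\<^sup>+g. ennreal (std_normal_density g * exp (c * g\<^sup>2)) \<partial>lborel)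
    = ennreal (1 / sqrt (1 - 2 * c))"
proof -
  define \<sigma> where "\<sigma> = 1 / sqrt (1 - 2 * c)"
  have \<sigma>: "0 < \<sigma>" using c by (simp add: \<sigma>_def)
  have \<sigma>2: "\<sigma>\<^sup>2 = 1 / (1 - 2 * c)" using c by (simp add: \<sigma>_def power_divide)
  have "std_normal_density g * exp (c * g\<^sup>2) = \<sigma> * normal_density 0 \<sigma> g" for g
  proof -
    have "sqrt (2 * pi * \<sigma>\<^sup>2) = sqrt (2 * pi) * \<sigma>" using \<sigma> by (simp add: real_sqrt_mult)
    moreover have "- g\<^sup>2 / 2 + c * g\<^sup>2 = - g\<^sup>2 / (2 * \<sigma>\<^sup>2)" using c by (simp add: \<sigma>2 field_simps)
    ultimately show ?thesis using \<sigma>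
      by (simp add: normal_density_def std_normal_density_def mult_exp_exp[symmetric]
          exp_add[symmetric] field_simps)
  qed
  then have "(\<integral>\<^sup>+g. ennreal (std_normal_density g * exp (c * g\<^sup>2)) \<partial>lborel)
      = ennreal \<sigma> * (\<integral>\<^sup>+g. ennreal (normal_density 0 \<sigma> g) \<partial>lborel)"
    using \<sigma> by (simp add: ennreal_mult nn_integral_cmult)
  also have "(\<integral>\<^sup>+g. ennreal (normal_density 0 \<sigma> g) \<partial>lborel) = 1"
    using \<sigma> by (subst nn_integral_eq_integral) auto
  finally show ?thesis by (simp add: \<sigma>_def)
qed

lemma nn_integral_exp_square_le_of_subgaussian:
  fixes X :: "'a \<Rightarrow> real"
  assumes M: "prob_space M" and X[measurable]: "X \<in> borel_measurable M"
    and mgf: "\<And>t. (\<integral>\<^sup>+x. ennreal (exp (t * X x)) \<partial>M) \<le> ennreal (exp (t\<^sup>2 * v))"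
    and lam: "0 \<le> lam" and lam_v: "4 * lam * v < 1"
  shows "(\<integral>\<^sup>+x. ennreal (exp (lam * (X x)\<^sup>2)) \<partial>M) \<le> ennreal (1 / sqrt (1 - 4 * lam * v))"
proof -
  interpret prob_space M by fact
  interpret pair_sigma_finite M lborel
    by (simp add: pair_sigma_finite.intro sigma_finite_measure_axioms lborel.sigma_finite_measure_axioms)
  define a where "a = sqrt (2 * lam)"
  have a2: "a\<^sup>2 = 2 * lam" using lam by (simp add: a_def)
  \<comment> \<open>Linearize the square through the Gaussian mgf: exp (lam X^2) is a Gaussian mixture of
    the exponentials exp (a g X).\<close>
  have "(\<integral>\<^sup>+x. ennreal (exp (lam * (X x)\<^sup>2)) \<partial>M)
      = (\<integral>\<^sup>+x. (\<integral>\<^sup>+g. ennreal (std_normal_density g * exp ((a * X x) * g)) \<partial>lborel) \<partial>M)"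
  proof (intro nn_integral_cong)
    fix x
    have "lam * (X x)\<^sup>2 = (a * X x)\<^sup>2 / 2" by (simp add: power_mult_distrib a2)
    then show "ennreal (exp (lam * (X x)\<^sup>2))
        = (\<integral>\<^sup>+g. ennreal (std_normal_density g * exp ((a * X x) * g)) \<partial>lborel)"
      by (simp add: nn_integral_std_normal_exp_linear)
  qed
  also have "\<dots> = (\<integral>\<^sup>+g. (\<integral>\<^sup>+x. ennreal (std_normal_density g * exp ((a * X x) * g)) \<partial>M) \<partial>lborel)"
    by (rule Fubini'[symmetric]) measurable
  also have "\<dots> = (\<integral>\<^sup>+g. ennreal (std_normal_density g)
                      * (\<integral>\<^sup>+x. ennreal (exp ((a * g) * X x)) \<partial>M) \<partial>lborel)"
    by (intro nn_integral_cong, subst nn_integral_cmult[symmetric]) (auto simp: ennreal_mult mult_ac)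
  also have "\<dots> \<le> (\<integral>\<^sup>+g. ennreal (std_normal_density g) * ennreal (exp ((a * g)\<^sup>2 * v)) \<partial>lborel)"
    by (intro nn_integral_mono mult_left_mono mgf) auto
  also have "\<dots> = (\<integral>\<^sup>+g. ennreal (std_normal_density g * exp ((2 * lam * v) * g\<^sup>2)) \<partial>lborel)"
    by (intro nn_integral_cong) (simp add: ennreal_mult power_mult_distrib a2 mult_ac)
  also have "\<dots> = ennreal (1 / sqrt (1 - 4 * lam * v))"
    using lam_v by (subst nn_integral_std_normal_exp_quadratic) simp_all
  finally show ?thesis .
qed

lemma Hoeffdings_lemma_nn_integral_centered:
  assumes "prob_space M" and h[measurable]: "h \<in> borel_measurable M"
    and h_range: "\<And>x. x \<in> space M \<Longrightarrow> a \<le> h x \<and> h x \<le> b"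
  shows "(\<integral>\<^sup>+x. ennreal (exp (u * ((\<integral>x. h x \<partial>M) - h x))) \<partial>M) \<le> ennreal (exp (u\<^sup>2 * (b - a)\<^sup>2 / 8))"
proof -
  interpret prob_space M by fact
  consider "u > 0" | "u < 0" | "u = 0" by linarith
  then show ?thesis
  proof cases
    case 1
    interpret interval_bounded_random_variable M "\<lambda>x. - h x" "- b" "- a"
      by unfold_locales (use h_range in auto)
    have "(\<integral>\<^sup>+x. ennreal (exp (u * (- h x - expectation (\<lambda>x. - h x)))) \<partial>M)
        \<le> ennreal (exp (u\<^sup>2 * (- a - - b)\<^sup>2 / 8))"
      by (rule Hoeffdings_lemma_nn_integral) (use 1 in auto)
    then show ?thesis by (simp add: algebra_simps)
  next
    case 2
    interpret interval_bounded_random_variable M h a b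
      by unfold_locales (use h_range in auto)
    have "(\<integral>\<^sup>+x. ennreal (exp ((- u) * (h x - expectation h))) \<partial>M)
        \<le> ennreal (exp ((- u)\<^sup>2 * (b - a)\<^sup>2 / 8))"
      by (rule Hoeffdings_lemma_nn_integral) (use 2 in auto)
    then show ?thesis by (simp add: algebra_simps)
  next
    case 3
    then show ?thesis by (simp add: emeasure_space_1)
  qed
qed

lemma Hoeffding_nn_integral_exp_mean_PiM:
  fixes n :: nat and h :: "'a \<Rightarrow> real"
  assumes M: "prob_space M" and h[measurable]: "h \<in> borel_measurable M"
    and h_range: "\<And>x. x \<in> space M \<Longrightarrow> a \<le> h x \<and> h x \<le> b" and n: "0 < n"
  shows "(\<integral>\<^sup>+s. ennreal (exp (u * ((\<Sum>i<n. (\<integral>x. h x \<partial>M) - h (s i)) / n))) \<partial>PiM {..<n} (\<lambda>_. M))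
    \<le> ennreal (exp (u\<^sup>2 * (b - a)\<^sup>2 / (8 * n)))"
proof -
  interpret prob_space M by fact
  interpret product_sigma_finite "\<lambda>_. M"
    by (simp add: product_sigma_finite_def sigma_finite_measure_axioms)
  define c where "c = (\<integral>x. h x \<partial>M)"
  have "(\<integral>\<^sup>+s. ennreal (exp (u * ((\<Sum>i<n. c - h (s i)) / n))) \<partial>PiM {..<n} (\<lambda>_. M))
      = (\<integral>\<^sup>+s. (\<Prod>i\<in>{..<n}. ennreal (exp ((u / n) * (c - h (s i))))) \<partial>PiM {..<n} (\<lambda>_. M))"
    by (intro nn_integral_cong)
      (simp add: prod_ennreal sum_distrib_left sum_divide_distrib flip: exp_sum)
  also have "\<dots> = (\<Prod>i\<in>{..<n}. (\<integral>\<^sup>+x. ennreal (exp ((u / n) * (c - h x))) \<partial>M))"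
    by (rule product_nn_integral_prod) auto
  also have "\<dots> \<le> (\<Prod>i\<in>{..<n}. ennreal (exp ((u / n)\<^sup>2 * (b - a)\<^sup>2 / 8)))"
    by (intro prod_mono_ennreal Hoeffdings_lemma_nn_integral_centered[OF M h h_range, folded c_def])
  also have "\<dots> = ennreal (exp (u\<^sup>2 * (b - a)\<^sup>2 / (8 * n)))"
  proof -
    have "exp ((u / n)\<^sup>2 * (b - a)\<^sup>2 / 8) ^ n = exp (real n * ((u / n)\<^sup>2 * (b - a)\<^sup>2 / 8))"
      by (rule exp_of_nat_mult[symmetric])
    also have "real n * ((u / n)\<^sup>2 * (b - a)\<^sup>2 / 8) = u\<^sup>2 * (b - a)\<^sup>2 / (8 * n)"
      using n by (simp add: power2_eq_square field_simps)
    finally show ?thesis by (simp add: ennreal_power)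
  qed
  finally show ?thesis by (simp add: c_def)
qed

lemma KLe_nonneg:
  assumes "prob_space Q" "prob_space P"
  shows "0 \<le> KLe Q P"
  using integral_le_KLe_plus_ln_integral_exp[OF assms, of "\<lambda>_. 0" 0] prob_space.prob_space[OF assms(2)]
  by (simp add: zero_ereal_def)

lemma KLe_self:
  assumes "prob_space P"
  shows "KLe P P = 0"
proof -
  interpret prob_space P by fact
  have "AE x in P. 1 = RN_deriv P P x"
    by (rule RN_deriv_unique) (simp_all add: density_1)
  then have ln_RN: "AE x in P. ln (enn2real (RN_deriv P P x)) = 0"
    by eventually_elim (metis enn2real_1 ln_one)
  have "integrable P (\<lambda>x. ln (enn2real (RN_deriv P P x)))"
    using integrable_cong_AE[OF _ _ ln_RN] by simp
  moreover have "(\<integral>x. ln (enn2real (RN_deriv P P x)) \<partial>P) = 0"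
    using integral_cong_AE[OF _ _ ln_RN] by simp
  ultimately show ?thesis by (simp add: KLe_def absolutely_continuous_def)
qed

lemma KLe_le_logM:
  assumes PS: "prob_space PS" and \<delta>: "0 < \<delta>" "\<delta> \<le> 1"
  shows "KLe (\<pi> s) (PS \<bind> \<pi>) \<le> logM PS \<pi> \<delta> s"
  unfolding logM_def
  by (rule SUP_upper) (use PS \<delta> KLe_self[OF PS] in \<open>auto simp: space_prob_algebra\<close>)

lemma prob_space_joint:
  assumes P: "P \<in> space (prob_algebra A)" and K: "K \<in> A \<rightarrow>\<^sub>M prob_algebra B"
  shows "prob_space (joint A B P K)" and "sets (joint A B P K) = sets (A \<Otimes>\<^sub>M B)"
proof -
  have "(\<lambda>w. K w \<bind> (\<lambda>wh. return (A \<Otimes>\<^sub>M B) (w, wh))) \<in> A \<rightarrow>\<^sub>M prob_algebra (A \<Otimes>\<^sub>M B)"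
    by (rule measurable_bind_prob_space2[OF K])
      (simp add: case_prod_eta measurable_return_prob_space)
  from prob_space_bind'[OF P this] sets_bind'[OF P this]
  show "prob_space (joint A B P K)" "sets (joint A B P K) = sets (A \<Otimes>\<^sub>M B)"
    by (simp_all add: joint_def)
qed

lemma MI_joint_nonneg:
  assumes P: "P \<in> space (prob_algebra A)" and K: "K \<in> A \<rightarrow>\<^sub>M prob_algebra B"
  shows "0 \<le> MI A B (joint A B P K)"
proof -
  note J = prob_space_joint[OF P K]
  interpret J: prob_space "joint A B P K" by (rule J(1))
  have "fst \<in> joint A B P K \<rightarrow>\<^sub>M A" "snd \<in> joint A B P K \<rightarrow>\<^sub>M B"
    by (simp_all add: measurable_cong_sets[OF J(2) refl])
  then show ?thesis
    unfolding MI_def by (intro KLe_nonneg J(1) prob_space_pair J.prob_space_distr)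
qed

lemma RD_nonneg:
  assumes "P \<in> space (prob_algebra (traj_space t1 t2 W))"
  shows "0 \<le> RD W What \<rho> t1 t2 \<epsilon> P"
  unfolding RD_def Let_def
  by (rule INF_greatest) (use MI_joint_nonneg[OF assms] in blast)

text \<open>No kernel meets a negative distortion budget, and the infimum over the empty set is \<infinity>.\<close>

lemma RD_eq_infinity_if_neg:
  assumes "\<epsilon> < 0"
  shows "RD W What \<rho> t1 t2 \<epsilon> P = \<infinity>"
proof -
  have "\<not> enn2ereal x \<le> ereal \<epsilon>" for x
    using assms order_trans[OF enn2ereal_nonneg[of x]] by force
  then show ?thesis unfolding RD_def Let_def by (simp add: top_ereal_def)
qed

lemma (in prob_space) Markov_prob_nn_integral_le:
  assumes F[measurable]: "F \<in> borel_measurable M" and int_F: "(\<integral>\<^sup>+x. F x \<partial>M) \<le> ennreal C"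
    and C: "0 < C" and \<delta>: "0 < \<delta>"
  shows "1 - \<delta> \<le> prob {x \<in> space M. F x \<le> ennreal (C / \<delta>)}"
proof -
  define B where "B = {x \<in> space M. ennreal (C / \<delta>) < F x}"
  have "B \<subseteq> {x \<in> space M. 1 \<le> ennreal (\<delta> / C) * F x}"
  proof safe
    fix x assume "x \<in> B"
    then have "ennreal (\<delta> / C) * ennreal (C / \<delta>) \<le> ennreal (\<delta> / C) * F x"
      by (intro mult_left_mono) (auto simp: B_def)
    then show "1 \<le> ennreal (\<delta> / C) * F x"
      using C \<delta> by (simp flip: ennreal_mult)
  qed (simp add: B_def)
  then have "emeasure M B \<le> emeasure M {x \<in> space M. 1 \<le> ennreal (\<delta> / C) * F x}"
    by (intro emeasure_mono) measurable
  also have "\<dots> \<le> ennreal (\<delta> / C) * (\<integral>\<^sup>+x. F x \<partial>M)"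
    using nn_integral_Markov_inequality[of F "space M" M "ennreal (\<delta> / C)"] by simp
  also have "\<dots> \<le> ennreal (\<delta> / C) * ennreal C"
    by (rule mult_left_mono[OF int_F]) simp
  also have "\<dots> = ennreal \<delta>"
    using C \<delta> by (simp flip: ennreal_mult)
  finally have "prob B \<le> \<delta>"
    using \<delta> by (simp add: emeasure_eq_measure)
  moreover have "{x \<in> space M. F x \<le> ennreal (C / \<delta>)} = space M - B"
    by (auto simp: B_def not_less)
  moreover have "B \<in> events" unfolding B_def by measurable
  ultimately show ?thesis by (simp add: prob_compl)
qed

lemma nn_integral_bind_kernel_le:
  fixes g :: "'s \<Rightarrow> 't \<Rightarrow> ennreal"
  assumes PS: "prob_space PS" and \<pi>: "\<pi> \<in> PS \<rightarrow>\<^sub>M prob_algebra TS"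
    and g: "(\<lambda>(s, w). g s w) \<in> borel_measurable (PS \<Otimes>\<^sub>M TS)"
    and g_le: "\<And>w. w \<in> space TS \<Longrightarrow> (\<integral>\<^sup>+s. g s w \<partial>PS) \<le> C"
  shows "(\<lambda>s. \<integral>\<^sup>+w. g s w \<partial>(PS \<bind> \<pi>)) \<in> borel_measurable PS"
    and "(\<integral>\<^sup>+s. (\<integral>\<^sup>+w. g s w \<partial>(PS \<bind> \<pi>)) \<partial>PS) \<le> C"
proof -
  interpret PS: prob_space PS by fact
  have PS_alg: "PS \<in> space (prob_algebra PS)" by (simp add: space_prob_algebra PS)
  interpret P: prob_space "PS \<bind> \<pi>" by (rule prob_space_bind'[OF PS_alg \<pi>])
  have sets_P: "sets (PS \<bind> \<pi>) = sets TS" by (rule sets_bind'[OF PS_alg \<pi>])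
  interpret PSP: pair_sigma_finite PS "PS \<bind> \<pi>" ..
  have g_P: "(\<lambda>(s, w). g s w) \<in> borel_measurable (PS \<Otimes>\<^sub>M (PS \<bind> \<pi>))"
    using g by (simp add: measurable_cong_sets[OF sets_pair_measure_cong[OF refl sets_P] refl])
  from P.borel_measurable_nn_integral[OF this]
  show "(\<lambda>s. \<integral>\<^sup>+w. g s w \<partial>(PS \<bind> \<pi>)) \<in> borel_measurable PS" by simp
  have "(\<integral>\<^sup>+s. (\<integral>\<^sup>+w. g s w \<partial>(PS \<bind> \<pi>)) \<partial>PS) = (\<integral>\<^sup>+w. (\<integral>\<^sup>+s. g s w \<partial>PS) \<partial>(PS \<bind> \<pi>))"
    by (rule PSP.Fubini'[symmetric, OF g_P])
  also have "\<dots> \<le> (\<integral>\<^sup>+w. C \<partial>(PS \<bind> \<pi>))"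
    by (rule nn_integral_mono) (simp add: g_le sets_eq_imp_space_eq[OF sets_P])
  finally show "(\<integral>\<^sup>+s. (\<integral>\<^sup>+w. g s w \<partial>(PS \<bind> \<pi>)) \<partial>PS) \<le> C"
    by (simp add: P.emeasure_space_1)
qed

lemma PAC_Bayes_bound:
  fixes PS :: "'s measure" and TS :: "'t measure" and f :: "'s \<Rightarrow> 't \<Rightarrow> real"
  assumes PS: "prob_space PS" and \<pi>: "\<pi> \<in> PS \<rightarrow>\<^sub>M prob_algebra TS"
    and f_meas: "(\<lambda>(s, w). f s w) \<in> borel_measurable (PS \<Otimes>\<^sub>M TS)"
    and f_bounded: "\<And>s w. s \<in> space PS \<Longrightarrow> w \<in> space TS \<Longrightarrow> \<bar>f s w\<bar> \<le> B"
    and mgf: "\<And>w. w \<in> space TS \<Longrightarrow> (\<integral>\<^sup>+s. ennreal (exp (f s w)) \<partial>PS) \<le> ennreal C"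
    and C: "0 < C" and \<delta>: "0 < \<delta>"
  shows "\<exists>A \<in> sets PS.
    A \<subseteq> {s \<in> space PS. ereal (\<integral>w. f s w \<partial>\<pi> s) \<le> KLe (\<pi> s) (PS \<bind> \<pi>) + ereal (ln (C / \<delta>))}
    \<and> 1 - \<delta> \<le> measure PS A"
proof -
  interpret PS: prob_space PS by fact
  define P where "P = PS \<bind> \<pi>"
  have PS_alg: "PS \<in> space (prob_algebra PS)" by (simp add: space_prob_algebra PS)
  interpret P: prob_space P unfolding P_def by (rule prob_space_bind'[OF PS_alg \<pi>])
  have sets_P: "sets P = sets TS" unfolding P_def by (rule sets_bind'[OF PS_alg \<pi>])
  have exp_meas: "(\<lambda>x::real. ennreal (exp x)) \<in> borel_measurable borel" by measurable
  have "(\<lambda>(s, w). ennreal (exp (f s w))) \<in> borel_measurable (PS \<Otimes>\<^sub>M TS)"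
    using measurable_compose[OF f_meas exp_meas] by (simp add: case_prod_beta')
  note F = nn_integral_bind_kernel_le[OF PS \<pi> this mgf, folded P_def]
  define F where "F s = (\<integral>\<^sup>+w. ennreal (exp (f s w)) \<partial>P)" for s
  define A where "A = {s \<in> space PS. F s \<le> ennreal (C / \<delta>)}"
  have "1 - \<delta> \<le> measure PS A"
    unfolding A_def F_def by (rule PS.Markov_prob_nn_integral_le[OF F C \<delta>])
  moreover have "A \<in> sets PS" unfolding A_def F_def using F(1) by measurable
  moreover have "A \<subseteq> {s \<in> space PS. ereal (\<integral>w. f s w \<partial>\<pi> s) \<le> KLe (\<pi> s) P + ereal (ln (C / \<delta>))}"
    (is "_ \<subseteq> ?good")
  proof
    fix s assume "s \<in> A"
    then have s: "s \<in> space PS" and F_s: "F s \<le> ennreal (C / \<delta>)" by (auto simp: A_def)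
    have "f s \<in> borel_measurable TS"
      using measurable_compose[OF measurable_Pair1'[OF s] f_meas] by simp
    then have f_s[measurable]: "f s \<in> borel_measurable P"
      unfolding measurable_cong_sets[OF sets_P refl] .
    have f_s_bounded: "\<bar>f s w\<bar> \<le> B" if "w \<in> space P" for w
      using that by (intro f_bounded[OF s]) (simp add: sets_eq_imp_space_eq[OF sets_P])
    have "(\<integral>w. exp (f s w) \<partial>P) = enn2real (F s)"
      unfolding F_def by (rule integral_eq_nn_integral) auto
    then have "ln (\<integral>w. exp (f s w) \<partial>P) \<le> ln (C / \<delta>)"
      using P.integral_exp_pos(2)[OF f_s f_s_bounded] F_s C \<delta> by (simp add: enn2real_leI)
    moreover have "ereal (\<integral>w. f s w \<partial>\<pi> s) \<le> KLe (\<pi> s) P + ereal (ln (\<integral>w. exp (f s w) \<partial>P))"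
      using measurable_space[OF \<pi> s]
      by (intro integral_le_KLe_plus_ln_integral_exp[OF _ P.prob_space_axioms f_s f_s_bounded])
        (simp add: space_prob_algebra)
    ultimately show "s \<in> ?good"
      using s by (simp add: order_trans[OF _ add_left_mono])
  qed
  ultimately show ?thesis unfolding P_def[symmetric] by blast
qed

lemma (in prob_space) integral_le_sqrt_integral_square:
  assumes f: "integrable M f" and f2: "integrable M (\<lambda>x. (f x)\<^sup>2)"
  shows "(\<integral>x. f x \<partial>M) \<le> sqrt (\<integral>x. (f x)\<^sup>2 \<partial>M)"
proof -
  have "0 \<le> variance f" by (rule integral_nonneg_AE) simp
  then have "(\<integral>x. f x \<partial>M)\<^sup>2 \<le> (\<integral>x. (f x)\<^sup>2 \<partial>M)" using variance_eq[OF f f2] by simp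
  then show ?thesis using real_sqrt_le_mono real_sqrt_abs abs_ge_self order_trans by metis
qed

lemma abs_mean_deviation_le_1:
  fixes h :: "'a \<Rightarrow> real" and n :: nat
  assumes M: "prob_space M" and h[measurable]: "h \<in> borel_measurable M"
    and h_range: "\<And>x. x \<in> space M \<Longrightarrow> 0 \<le> h x \<and> h x \<le> 1"
    and s: "\<And>i. i < n \<Longrightarrow> s i \<in> space M"
  shows "\<bar>(\<Sum>i<n. (\<integral>x. h x \<partial>M) - h (s i)) / n\<bar> \<le> 1"
proof -
  interpret prob_space M by fact
  define c where "c = (\<integral>x. h x \<partial>M)"
  have int_h: "integrable M h"
    by (rule integrable_const_bound[where B=1]) (use h_range in auto)
  have "0 \<le> c" unfolding c_def by (rule integral_nonneg_AE) (use h_range in auto)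
  moreover have "c \<le> 1"
    using integral_mono[OF int_h _ , of "\<lambda>_. 1"] h_range by (simp add: c_def prob_space)
  ultimately have "\<bar>c - h (s i)\<bar> \<le> 1" if "i \<in> {..<n}" for i
    using h_range[OF s[of i]] that by (simp add: abs_le_iff)
  then have "(\<Sum>i<n. \<bar>c - h (s i)\<bar>) \<le> real n"
    using sum_bounded_above[of "{..<n}" "\<lambda>i. \<bar>c - h (s i)\<bar>" 1] by simp
  then have "\<bar>\<Sum>i<n. c - h (s i)\<bar> \<le> real n"
    using sum_abs[of "\<lambda>i. c - h (s i)" "{..<n}"] by linarith
  then show ?thesis by (cases "n = 0") (simp_all add: c_def divide_le_eq_1)
qed

lemma nn_integral_exp_square_mean_deviation_PiM:
  fixes h :: "'a \<Rightarrow> real" and n :: nat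
  assumes M: "prob_space M" and h[measurable]: "h \<in> borel_measurable M"
    and h_range: "\<And>x. x \<in> space M \<Longrightarrow> 0 \<le> h x \<and> h x \<le> 1" and n: "0 < n"
  shows "(\<integral>\<^sup>+s. ennreal (exp ((2 * real n - 1) * ((\<Sum>i<n. (\<integral>x. h x \<partial>M) - h (s i)) / n)\<^sup>2))
      \<partial>PiM {..<n} (\<lambda>_. M)) \<le> ennreal (sqrt (2 * real n))"
proof -
  have "(\<integral>\<^sup>+s. ennreal (exp ((2 * real n - 1) * ((\<Sum>i<n. (\<integral>x. h x \<partial>M) - h (s i)) / n)\<^sup>2))
      \<partial>PiM {..<n} (\<lambda>_. M)) \<le> ennreal (1 / sqrt (1 - 4 * (2 * real n - 1) * (1 / (8 * real n))))"
  proof (rule nn_integral_exp_square_le_of_subgaussian[OF prob_space_PiM[OF M]])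
    show "(\<integral>\<^sup>+s. ennreal (exp (u * ((\<Sum>i<n. (\<integral>x. h x \<partial>M) - h (s i)) / n))) \<partial>PiM {..<n} (\<lambda>_. M))
        \<le> ennreal (exp (u\<^sup>2 * (1 / (8 * real n))))" for u
      using Hoeffding_nn_integral_exp_mean_PiM[OF M h h_range n, of u] by simp
  qed (use n in \<open>auto simp: field_simps\<close>)
  also have "1 / sqrt (1 - 4 * (2 * real n - 1) * (1 / (8 * real n))) = sqrt (2 * real n)"
    using n by (simp add: field_simps real_sqrt_divide)
  finally show ?thesis .
qed

definition traj_loss :: "('z \<Rightarrow> 'w \<Rightarrow> real) \<Rightarrow> nat \<Rightarrow> nat \<Rightarrow> (nat \<Rightarrow> 'w) \<Rightarrow> 'z \<Rightarrow> real" where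
  "traj_loss l t1 t2 wT z = (\<Sum>t\<in>Tset t1 t2. l z (wT t)) / real (t2 - t1)"

locale bounded_loss = prob_space \<mu> for \<mu> :: "'z measure" +
  fixes W :: "'w measure" and l :: "'z \<Rightarrow> 'w \<Rightarrow> real"
  assumes measurable_loss: "(\<lambda>(z, w). l z w) \<in> borel_measurable (\<mu> \<Otimes>\<^sub>M W)"
    and loss_range: "\<And>z w. z \<in> space \<mu> \<Longrightarrow> w \<in> space W \<Longrightarrow> 0 \<le> l z w \<and> l z w \<le> 1"
begin

lemma measurable_loss_compose:
  assumes "f \<in> M \<rightarrow>\<^sub>M \<mu>" and "h \<in> M \<rightarrow>\<^sub>M W"
  shows "(\<lambda>x. l (f x) (h x)) \<in> borel_measurable M"
  using measurable_compose[OF measurable_Pair[OF assms] measurable_loss] by simp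

lemma traj_space_apply:
  assumes "wT \<in> space (traj_space t1 t2 W)" and "t \<in> Tset t1 t2"
  shows "wT t \<in> space W"
  using assms by (auto simp: traj_space_def space_PiM)

lemma measurable_traj_loss:
  assumes "wT \<in> space (traj_space t1 t2 W)"
  shows "traj_loss l t1 t2 wT \<in> borel_measurable \<mu>"
  unfolding traj_loss_def
  by (intro borel_measurable_divide borel_measurable_sum borel_measurable_const measurable_loss_compose
      measurable_ident_sets measurable_const traj_space_apply[OF assms]) auto

lemma traj_loss_range:
  assumes T: "t1 < t2" and wT: "wT \<in> space (traj_space t1 t2 W)" and z: "z \<in> space \<mu>"
  shows "0 \<le> traj_loss l t1 t2 wT z \<and> traj_loss l t1 t2 wT z \<le> 1"
proof -
  have "0 \<le> (\<Sum>t\<in>Tset t1 t2. l z (wT t))"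
    by (rule sum_nonneg) (use loss_range traj_space_apply[OF wT] z in auto)
  moreover have "(\<Sum>t\<in>Tset t1 t2. l z (wT t)) \<le> real (card (Tset t1 t2)) * 1"
    by (rule sum_bounded_above) (use loss_range traj_space_apply[OF wT] z in auto)
  ultimately show ?thesis using T by (simp add: traj_loss_def Tset_def)
qed

lemma integral_traj_loss:
  assumes wT: "wT \<in> space (traj_space t1 t2 W)"
  shows "(\<integral>z. traj_loss l t1 t2 wT z \<partial>\<mu>) = (\<Sum>t\<in>Tset t1 t2. pop_loss \<mu> l (wT t)) / real (t2 - t1)"
proof -
  have "integrable \<mu> (\<lambda>z. l z (wT t))" if "t \<in> Tset t1 t2" for t
    by (rule integrable_const_bound[where B=1])
      (use loss_range traj_space_apply[OF wT that]
        in \<open>auto intro: measurable_loss_compose measurable_ident_sets measurable_const\<close>)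
  then show ?thesis
    by (simp add: traj_loss_def pop_loss_def Bochner_Integration.integral_sum)
qed

lemma gen_traj_eq_mean_deviation:
  assumes n: "0 < n" and wT: "wT \<in> space (traj_space t1 t2 W)"
  shows "gen_traj \<mu> n l t1 t2 s wT
    = (\<Sum>i<n. (\<integral>z. traj_loss l t1 t2 wT z \<partial>\<mu>) - traj_loss l t1 t2 wT (s i)) / n"
proof -
  define D where "D = real (t2 - t1)"
  define pop where "pop = (\<Sum>t\<in>Tset t1 t2. pop_loss \<mu> l (wT t))"
  define emp where "emp = (\<Sum>t\<in>Tset t1 t2. \<Sum>i<n. l (s i) (wT t))"
  have "gen_traj \<mu> n l t1 t2 s wT = (pop - emp / n) / D"
    unfolding gen_traj_def gen_def emp_loss_def pop_def emp_def D_def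
    by (simp only: sum_subtractf sum_divide_distrib[symmetric])
  moreover have "(\<Sum>i<n. traj_loss l t1 t2 wT (s i)) = emp / D"
    unfolding traj_loss_def emp_def D_def
    by (simp only: sum_divide_distrib[symmetric] sum.swap[of _ "Tset t1 t2"])
  then have "(\<Sum>i<n. (\<integral>z. traj_loss l t1 t2 wT z \<partial>\<mu>) - traj_loss l t1 t2 wT (s i))
      = n * (pop / D) - emp / D"
    by (simp add: sum_subtractf integral_traj_loss[OF wT] pop_def D_def)
  ultimately show ?thesis
    using n by (simp add: diff_divide_distrib)
qed

lemma measurable_gen_traj:
  "(\<lambda>(s, wT). gen_traj \<mu> n l t1 t2 s wT)
    \<in> borel_measurable (PiM {..<n} (\<lambda>_. \<mu>) \<Otimes>\<^sub>M traj_space t1 t2 W)"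
proof -
  let ?M = "PiM {..<n} (\<lambda>_. \<mu>) \<Otimes>\<^sub>M traj_space t1 t2 W"
  have traj: "(\<lambda>x. snd x t) \<in> ?M \<rightarrow>\<^sub>M W" if "t \<in> Tset t1 t2" for t
    using that unfolding traj_space_def by measurable
  have sample: "(\<lambda>x. fst x i) \<in> ?M \<rightarrow>\<^sub>M \<mu>" if "i \<in> {..<n}" for i
    using that by measurable
  have pop_loss: "pop_loss \<mu> l \<in> borel_measurable W"
  proof -
    have "(\<lambda>(w, z). l z w) \<in> borel_measurable (W \<Otimes>\<^sub>M \<mu>)"
      using measurable_loss_compose[of snd "W \<Otimes>\<^sub>M \<mu>" fst] by (simp add: case_prod_beta')
    then show ?thesis unfolding pop_loss_def by (rule borel_measurable_lebesgue_integral)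
  qed
  show ?thesis
    unfolding gen_traj_def gen_def emp_loss_def case_prod_beta'
    by (intro borel_measurable_divide borel_measurable_sum borel_measurable_diff borel_measurable_const
        measurable_compose[OF traj pop_loss] measurable_loss_compose[OF sample traj])
qed

lemma abs_gen_traj_le_1:
  assumes n: "0 < n" and T: "t1 < t2"
    and s: "s \<in> space (PiM {..<n} (\<lambda>_. \<mu>))" and wT: "wT \<in> space (traj_space t1 t2 W)"
  shows "\<bar>gen_traj \<mu> n l t1 t2 s wT\<bar> \<le> 1"
  unfolding gen_traj_eq_mean_deviation[OF n wT]
  by (rule abs_mean_deviation_le_1[OF prob_space_axioms measurable_traj_loss[OF wT]
        traj_loss_range[OF T wT]]) (use s in \<open>auto simp: space_PiM\<close>)

lemma nn_integral_exp_square_gen_traj_le: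
  assumes n: "0 < n" and T: "t1 < t2" and wT: "wT \<in> space (traj_space t1 t2 W)"
  shows "(\<integral>\<^sup>+s. ennreal (exp ((2 * real n - 1) * (gen_traj \<mu> n l t1 t2 s wT)\<^sup>2))
      \<partial>PiM {..<n} (\<lambda>_. \<mu>)) \<le> ennreal (sqrt (2 * real n))"
  using nn_integral_exp_square_mean_deviation_PiM[OF prob_space_axioms measurable_traj_loss[OF wT]
      traj_loss_range[OF T wT] n]
  by (simp add: gen_traj_eq_mean_deviation[OF n wT])

lemma integral_gen_traj_le_sqrt:
  assumes n: "0 < n" and T: "t1 < t2" and s: "s \<in> space (PiM {..<n} (\<lambda>_. \<mu>))"
    and Q: "Q \<in> space (prob_algebra (traj_space t1 t2 W))"
    and bound: "(\<integral>wT. (2 * real n - 1) * (gen_traj \<mu> n l t1 t2 s wT)\<^sup>2 \<partial>Q) \<le> c"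
  shows "(\<integral>wT. gen_traj \<mu> n l t1 t2 s wT \<partial>Q) \<le> sqrt (c / (2 * real n - 1))"
proof -
  interpret Q: prob_space Q using Q by (simp add: space_prob_algebra)
  have sets_Q: "sets Q = sets (traj_space t1 t2 W)" using Q by (simp add: space_prob_algebra)
  have "gen_traj \<mu> n l t1 t2 s \<in> borel_measurable (traj_space t1 t2 W)"
    using measurable_compose[OF measurable_Pair1'[OF s] measurable_gen_traj] by simp
  then have g_meas: "gen_traj \<mu> n l t1 t2 s \<in> borel_measurable Q"
    unfolding measurable_cong_sets[OF sets_Q refl] .
  have g_bounded: "\<bar>gen_traj \<mu> n l t1 t2 s wT\<bar> \<le> 1" if "wT \<in> space Q" for wT
    using abs_gen_traj_le_1[OF n T s] that sets_eq_imp_space_eq[OF sets_Q] by simp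
  have "integrable Q (gen_traj \<mu> n l t1 t2 s)"
    by (rule Q.integrable_const_bound[where B=1]) (use g_meas g_bounded in auto)
  moreover have int_g2: "integrable Q (\<lambda>wT. (gen_traj \<mu> n l t1 t2 s wT)\<^sup>2)"
    by (rule Q.integrable_const_bound[where B=1])
      (use g_meas g_bounded in \<open>auto simp: abs_square_le_1\<close>)
  ultimately have "(\<integral>wT. gen_traj \<mu> n l t1 t2 s wT \<partial>Q)
      \<le> sqrt (\<integral>wT. (gen_traj \<mu> n l t1 t2 s wT)\<^sup>2 \<partial>Q)"
    by (rule Q.integral_le_sqrt_integral_square)
  also have "(\<integral>wT. (gen_traj \<mu> n l t1 t2 s wT)\<^sup>2 \<partial>Q) \<le> c / (2 * real n - 1)"
  proof -
    have "(2 * real n - 1) * (\<integral>wT. (gen_traj \<mu> n l t1 t2 s wT)\<^sup>2 \<partial>Q) \<le> c"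
      using bound by simp
    then show ?thesis using n by (simp add: field_simps)
  qed
  finally show ?thesis by (meson order_trans real_sqrt_le_mono)
qed

lemma integral_gen_traj_le_RD_logM:
  assumes n: "0 < n" and T: "t1 < t2" and \<delta>: "0 < \<delta>" "\<delta> \<le> 1"
    and \<pi>: "\<pi> \<in> PiM {..<n} (\<lambda>_. \<mu>) \<rightarrow>\<^sub>M prob_algebra (traj_space t1 t2 W)"
    and s: "s \<in> space (PiM {..<n} (\<lambda>_. \<mu>))" and L: "0 \<le> L"
    and PAC: "ereal (\<integral>wT. (2 * real n - 1) * (gen_traj \<mu> n l t1 t2 s wT)\<^sup>2 \<partial>\<pi> s)
      \<le> KLe (\<pi> s) (PiM {..<n} (\<lambda>_. \<mu>) \<bind> \<pi>) + ereal (ln (sqrt (2 * real n) / \<delta>))"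
  shows "RD W What \<rho> t1 t2 \<epsilon> (\<pi> s) = \<infinity>
    \<or> logM (PiM {..<n} (\<lambda>_. \<mu>)) \<pi> \<delta> s = \<infinity>
    \<or> (\<integral>wT. gen_traj \<mu> n l t1 t2 s wT \<partial>\<pi> s)
        \<le> sqrt ((real_of_ereal (RD W What \<rho> t1 t2 \<epsilon> (\<pi> s))
                 + ln (sqrt (2 * real n) * exp (real_of_ereal (logM (PiM {..<n} (\<lambda>_. \<mu>)) \<pi> \<delta> s)) / \<delta>))
                / (2 * real n - 1)
               + 4 * L * \<epsilon>)"
    (is "?R = \<infinity> \<or> ?M = \<infinity> \<or> _ \<le> _")
proof (cases "?R = \<infinity> \<or> ?M = \<infinity>")
  case True
  then show ?thesis by blast
next
  case False
  then have finite: "?R \<noteq> \<infinity>" "?M \<noteq> \<infinity>" by auto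
  have \<pi>_s: "\<pi> s \<in> space (prob_algebra (traj_space t1 t2 W))" by (rule measurable_space[OF \<pi> s])
  have PS: "prob_space (PiM {..<n} (\<lambda>_. \<mu>))" by (rule prob_space_PiM) unfold_locales
  have "0 \<le> KLe (\<pi> s) (PiM {..<n} (\<lambda>_. \<mu>) \<bind> \<pi>)"
    by (intro KLe_nonneg prob_space_bind'[OF _ \<pi>])
      (use \<pi>_s PS in \<open>simp_all add: space_prob_algebra\<close>)
  with KLe_le_logM[OF PS \<delta>, of \<pi> s] finite(2) obtain k
    where k: "?M = ereal k" "KLe (\<pi> s) (PiM {..<n} (\<lambda>_. \<mu>) \<bind> \<pi>) \<le> ereal k"
    by (cases ?M) auto
  have "(\<integral>wT. (2 * real n - 1) * (gen_traj \<mu> n l t1 t2 s wT)\<^sup>2 \<partial>\<pi> s) \<le> k + ln (sqrt (2 * real n) / \<delta>)"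
    using order_trans[OF PAC add_right_mono[OF k(2)]] by simp
  then have "(\<integral>wT. gen_traj \<mu> n l t1 t2 s wT \<partial>\<pi> s)
      \<le> sqrt ((k + ln (sqrt (2 * real n) / \<delta>)) / (2 * real n - 1))"
    by (rule integral_gen_traj_le_sqrt[OF n T s \<pi>_s])
  also have "\<dots> \<le> sqrt ((real_of_ereal ?R + ln (sqrt (2 * real n) * exp k / \<delta>)) / (2 * real n - 1)
      + 4 * L * \<epsilon>)"
  proof -
    have "0 \<le> \<epsilon>" using RD_eq_infinity_if_neg[of \<epsilon>] finite(1) by fastforce
    then have "0 \<le> 4 * L * \<epsilon>" using L by simp
    moreover have "0 \<le> real_of_ereal ?R" by (rule real_of_ereal_pos[OF RD_nonneg[OF \<pi>_s]])
    then have "(k + ln (sqrt (2 * real n) / \<delta>)) / (2 * real n - 1)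
        \<le> (real_of_ereal ?R + (k + ln (sqrt (2 * real n) / \<delta>))) / (2 * real n - 1)"
      using n by (intro divide_right_mono) simp_all
    moreover have "ln (sqrt (2 * real n) * exp k / \<delta>) = k + ln (sqrt (2 * real n) / \<delta>)"
      using n \<delta> by (simp add: ln_div ln_mult)
    ultimately show ?thesis by (intro real_sqrt_le_mono) simp
  qed
  finally show ?thesis using k(1) by simp
qed

end

theorem theorem7:
  fixes \<mu> :: "'z measure" and W :: "'w measure" and What :: "'w set"
    and l :: "'z \<Rightarrow> 'w \<Rightarrow> real" and \<rho> :: "'w \<Rightarrow> 'w \<Rightarrow> real" and L :: real
    and n t1 t2 :: nat and \<pi> :: "(nat \<Rightarrow> 'z) \<Rightarrow> (nat \<Rightarrow> 'w) measure"
    and \<epsilon> \<delta> :: real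
  assumes mu: "prob_space \<mu>"
    and n: "0 < n" and T: "t1 < t2"
    and What: "What \<subseteq> space W"
    and l_meas: "(\<lambda>(z, w). l z w) \<in> borel_measurable (\<mu> \<Otimes>\<^sub>M W)"
    and l_range: "\<forall>z\<in>space \<mu>. \<forall>w\<in>space W. 0 \<le> l z w \<and> l z w \<le> 1"
    and rho_meas: "(\<lambda>(w, wh). \<rho> w wh) \<in> borel_measurable (W \<Otimes>\<^sub>M restrict_space W What)"
    and rho_nonneg: "\<forall>w\<in>space W. \<forall>wh\<in>What. 0 \<le> \<rho> w wh"
    and L: "0 \<le> L"
    and lip: "\<forall>z\<in>space \<mu>. \<forall>w\<in>space W. \<forall>wh\<in>What. \<bar>l z w - l z wh\<bar> \<le> L * \<rho> w wh"
    and pi: "\<pi> \<in> measurable (PiM {..<n} (\<lambda>_. \<mu>)) (prob_algebra (traj_space t1 t2 W))"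
    and delta: "0 < \<delta>" "\<delta> < 1"
  shows "\<exists>A \<in> sets (PiM {..<n} (\<lambda>_. \<mu>)).
     A \<subseteq> {s \<in> space (PiM {..<n} (\<lambda>_. \<mu>)).
            RD W What \<rho> t1 t2 \<epsilon> (\<pi> s) = \<infinity>
          \<or> logM (PiM {..<n} (\<lambda>_. \<mu>)) \<pi> \<delta> s = \<infinity>
          \<or> (\<integral>wT. gen_traj \<mu> n l t1 t2 s wT \<partial>(\<pi> s))
              \<le> sqrt ((real_of_ereal (RD W What \<rho> t1 t2 \<epsilon> (\<pi> s))
                       + ln (sqrt (2 * real n)
                             * exp (real_of_ereal (logM (PiM {..<n} (\<lambda>_. \<mu>)) \<pi> \<delta> s)) / \<delta>))
                      / (2 * real n - 1)
                     + 4 * L * \<epsilon>)}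
     \<and> 1 - \<delta> \<le> measure (PiM {..<n} (\<lambda>_. \<mu>)) A"
proof -
  let ?PS = "PiM {..<n} (\<lambda>_. \<mu>)"
  let ?g = "gen_traj \<mu> n l t1 t2"
  interpret bounded_loss \<mu> W l
    using mu l_meas l_range by (simp add: bounded_loss_def bounded_loss_axioms_def)
  have PS: "prob_space ?PS" by (rule prob_space_PiM) (rule mu)
  have f_meas: "(\<lambda>(s, wT). (2 * real n - 1) * (?g s wT)\<^sup>2)
      \<in> borel_measurable (?PS \<Otimes>\<^sub>M traj_space t1 t2 W)"
    using measurable_gen_traj by measurable
  have f_bounded: "\<bar>(2 * real n - 1) * (?g s wT)\<^sup>2\<bar> \<le> 2 * real n - 1"
    if "s \<in> space ?PS" "wT \<in> space (traj_space t1 t2 W)" for s wT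
    using n abs_gen_traj_le_1[OF n T that] by (simp add: abs_mult abs_square_le_1)
  obtain A where A: "A \<in> sets ?PS" "1 - \<delta> \<le> measure ?PS A"
    and PAC: "A \<subseteq> {s \<in> space ?PS. ereal (\<integral>wT. (2 * real n - 1) * (?g s wT)\<^sup>2 \<partial>\<pi> s)
        \<le> KLe (\<pi> s) (?PS \<bind> \<pi>) + ereal (ln (sqrt (2 * real n) / \<delta>))}"
    using PAC_Bayes_bound[OF PS pi f_meas f_bounded nn_integral_exp_square_gen_traj_le[OF n T] _ delta(1)] n
    by auto
  show ?thesis
    using PAC integral_gen_traj_le_RD_logM[OF n T delta(1) less_imp_le[OF delta(2)] pi _ L]
    by (intro bexI[OF _ A(1)] conjI A(2) subsetI CollectI) blast+
qed

end
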